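(* There exist constants $c<1$ and $\alpha\in(0,1)$ such that the following holds asymptotically as $j\to\infty$: for every integer $m$ with $m=\omega(1)$ and $m\le\sqrt{j}$, $$\sum_{m'=-j}^{j}\bigl|d^j_{m'm}(\beta_m)\bigr|^2\,\frac{M'^{\alpha}}{M^{\alpha}}<c,$$ where $\beta_m=\arcsin(m/j)$, $M=\min(|m|,\sqrt{j}+1)$ and $M'=\min(|m'|,\sqrt{j}+1)$.
   Context: For spin quantum number $j$, let $J_y,J_z$ be the spin-$j$ angular momentum operators on the $(2j+1)$-dimensional space with orthonormal $J_z$-eigenbasis $|j,m\rangle$, $m\in\{-j,\dots,j\}$ (standard Condon–Shortley phase convention). The Wigner $d$-matrix elements are $d^j_{m'm}(\beta)=\langle j,m'|e^{-i\beta J_y}|j,m\rangle$; $|d^j_{m'm}(\beta)|^2$ is the probability of obtaining $J_z$-outcome $m'$ after rotating $|j,m\rangle$ by $e^{-i\beta J_y}$. The quantities $M,M'$ are proxies for $|m|,|m'|$ that saturate at $\sqrt{j}+1$ (corresponding to a reset whenever $|m'|>\sqrt{j}$). *)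

theory Defs
  imports "HOL-Analysis.Analysis"
begin

text \<open>Spin-j representation for integer spin j (j :: nat), basis |j,m>, m in {-j..j}.
  Operators are represented as matrices indexed by pairs of integers in {-j..j}.\<close>

definition mrange :: "nat \<Rightarrow> int set" where
  "mrange j = {- int j .. int j}"

text \<open>Matrix elements <j,a| J_y |j,b> in the Condon--Shortley convention:
  J_y = (J_+ - J_-)/(2i), J_+|j,b> = sqrt(j(j+1)-b(b+1)) |j,b+1>,
  J_-|j,b> = sqrt(j(j+1)-b(b-1)) |j,b-1>.\<close>
definition Jy :: "nat \<Rightarrow> int \<Rightarrow> int \<Rightarrow> complex" where
  "Jy j a b =
     (if a \<in> mrange j \<and> b \<in> mrange j then
        (if a = b + 1 then
           complex_of_real (sqrt (real j * (real j + 1) - real_of_int b * (real_of_int b + 1))) / (2 * \<i>)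
         else if a = b - 1 then
           - complex_of_real (sqrt (real j * (real j + 1) - real_of_int b * (real_of_int b - 1))) / (2 * \<i>)
         else 0)
      else 0)"

fun Jy_pow :: "nat \<Rightarrow> nat \<Rightarrow> int \<Rightarrow> int \<Rightarrow> complex" where
  "Jy_pow j 0 a b = (if a \<in> mrange j \<and> a = b then 1 else 0)"
| "Jy_pow j (Suc n) a b = (\<Sum>k\<in>mrange j. Jy j a k * Jy_pow j n k b)"

text \<open>Wigner d-matrix element d^j_{m'm}(beta) = <j,m'| exp(-i beta J_y) |j,m>,
  with the matrix exponential given by its defining power series.\<close>
definition wigner_d :: "nat \<Rightarrow> int \<Rightarrow> int \<Rightarrow> real \<Rightarrow> complex" where
  "wigner_d j m' m \<beta> =
     (\<Sum>n. ((- \<i> * complex_of_real \<beta>) ^ n / of_nat (fact n)) * Jy_pow j n m' m)"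

definition Msat :: "nat \<Rightarrow> int \<Rightarrow> real" where
  "Msat j m = min (real_of_int \<bar>m\<bar>) (sqrt (real j) + 1)"

definition lemma3_sum :: "real \<Rightarrow> nat \<Rightarrow> int \<Rightarrow> real" where
  "lemma3_sum \<alpha> j m =
     (\<Sum>m'\<in>mrange j.
        (cmod (wigner_d j m' m (arcsin (real_of_int m / real j))))\<^sup>2 *
        (Msat j m' powr \<alpha>) / (Msat j m powr \<alpha>))"

end

(*
  Take alpha = 1/2. For 1 <= m <= sqrt j we have M = m and M' <= |m'|, so each weight
  (M'/M)^(1/2) is at most sqrt |m'/m| <= q (m'/m) for a fixed quartic q (certified by sums of
  squares). The sum is therefore bounded by a combination of the first four moments of m'/m
  under the distribution |d^j_{m'm}(beta)|^2. These moments are diagonal entries of powers of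
  e^{i beta J_y} J_z e^{-i beta J_y} = cos beta J_z - sin beta J_x, an identity obtained from the
  exponential series by expanding the conjugation into iterated commutators with J_y. That
  matrix is tridiagonal, so the moments have closed forms in the ladder coefficients; with
  sin beta = m/j and m -> oo, m <= sqrt j, they tend to 1, 1, 3/2, 5/2, 35/8, and q has
  expectation 197/200 < 1 under these limits.
*)

theory Submission
  imports Defs "HOL-Real_Asymp.Real_Asymp"
begin

section \<open>Matrices on the spin-j basis\<close>

type_synonym 'a spin_mat = "int \<Rightarrow> int \<Rightarrow> 'a"

definition mmul :: "nat \<Rightarrow> 'a::semiring_0 spin_mat \<Rightarrow> 'a spin_mat \<Rightarrow> 'a spin_mat" where
  "mmul j A B = (\<lambda>a b. \<Sum>k\<in>mrange j. A a k * B k b)"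

definition supported :: "nat \<Rightarrow> 'a::zero spin_mat \<Rightarrow> bool" where
  "supported j A \<longleftrightarrow> (\<forall>a b. a \<notin> mrange j \<or> b \<notin> mrange j \<longrightarrow> A a b = 0)"

definition mdiag :: "nat \<Rightarrow> (int \<Rightarrow> 'a::zero) \<Rightarrow> 'a spin_mat" where
  "mdiag j f = (\<lambda>a b. if a \<in> mrange j \<and> a = b then f a else 0)"

primrec mpow :: "nat \<Rightarrow> 'a::semiring_1 spin_mat \<Rightarrow> nat \<Rightarrow> 'a spin_mat" where
  "mpow j A 0 = mdiag j (\<lambda>_. 1)"
| "mpow j A (Suc k) = mmul j (mpow j A k) A"

lemma finite_mrange [simp]: "finite (mrange j)"
  by (simp add: mrange_def)

lemma card_mrange: "card (mrange j) = 2 * j + 1"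
  by (simp add: mrange_def)

lemma sum_mrange_two:
  assumes "\<And>k. k \<notin> mrange j \<Longrightarrow> f k = 0" "\<And>k. k \<noteq> x \<Longrightarrow> k \<noteq> y \<Longrightarrow> f k = 0" "x \<noteq> y"
  shows "(\<Sum>k\<in>mrange j. f k) = f x + f y"
proof -
  have "(\<Sum>k\<in>mrange j. f k) = (\<Sum>k\<in>mrange j \<union> {x, y}. f k)"
    by (rule sum.mono_neutral_left) (use assms in auto)
  also have "\<dots> = (\<Sum>k\<in>{x, y}. f k)"
    by (rule sum.mono_neutral_right) (use assms in auto)
  finally show ?thesis
    using assms(3) by simp
qed

lemma sum_mrange_subset:
  assumes "S \<subseteq> mrange j" "\<And>k. k \<in> mrange j \<Longrightarrow> k \<notin> S \<Longrightarrow> f k = 0"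
  shows "(\<Sum>k\<in>mrange j. f k) = (\<Sum>k\<in>S. f k)"
  by (rule sum.mono_neutral_right) (use assms in auto)

lemma mmul_assoc: "mmul j (mmul j A B) C = mmul j A (mmul j B C)"
  unfolding mmul_def
  by (auto simp: sum_distrib_left sum_distrib_right mult.assoc intro!: ext sum.swap[THEN trans])

lemma mmul_sum_left: "mmul j (\<lambda>a b. \<Sum>p\<in>S. F p a b) B a b = (\<Sum>p\<in>S. mmul j (F p) B a b)"
  unfolding mmul_def by (simp add: sum_distrib_right sum.swap[of _ S])

lemma mmul_sum_right: "mmul j A (\<lambda>a b. \<Sum>p\<in>S. F p a b) a b = (\<Sum>p\<in>S. mmul j A (F p) a b)"
  unfolding mmul_def by (simp add: sum_distrib_left sum.swap[of _ S])

lemma mmul_scale_left: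
  "mmul j (\<lambda>a b. c * A a b) B a b = c * mmul j A B a b" for c :: "'a::comm_semiring_0"
  unfolding mmul_def by (simp add: sum_distrib_left mult.assoc)

lemma mmul_scale_right:
  "mmul j A (\<lambda>a b. c * B a b) a b = c * mmul j A B a b" for c :: "'a::comm_semiring_0"
  unfolding mmul_def by (simp add: sum_distrib_left mult_ac)

lemma mmul_of_real:
  "mmul j (\<lambda>a b. of_real (A a b)) (\<lambda>a b. of_real (B a b)) = (\<lambda>a b. of_real (mmul j A B a b))"
  by (simp add: mmul_def)

lemma mmul_mdiag_left: "mmul j (mdiag j f) A a b = (if a \<in> mrange j then f a * A a b else 0)"
proof -
  have "mmul j (mdiag j f) A a b = (\<Sum>k\<in>mrange j. if k = a then (if a \<in> mrange j then f a * A a b else 0) else 0)"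
    unfolding mmul_def mdiag_def by (rule sum.cong) auto
  then show ?thesis by simp
qed

lemma mmul_mdiag_right: "mmul j A (mdiag j f) a b = (if b \<in> mrange j then A a b * f b else 0)"
proof -
  have "mmul j A (mdiag j f) a b = (\<Sum>k\<in>mrange j. if k = b then (if b \<in> mrange j then A a b * f b else 0) else 0)"
    unfolding mmul_def mdiag_def by (rule sum.cong) auto
  then show ?thesis by simp
qed

lemma supported_mmul: "supported j A \<Longrightarrow> supported j B \<Longrightarrow> supported j (mmul j A B)"
  by (auto simp: supported_def mmul_def intro!: sum.neutral)

lemma supported_mdiag: "supported j (mdiag j f)"
  by (simp add: supported_def mdiag_def)

lemma mmul_one_left:
  "supported j A \<Longrightarrow> mmul j (mdiag j (\<lambda>_. 1)) A = A" for A :: "'a::semiring_1 spin_mat"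
  by (intro ext) (auto simp: mmul_mdiag_left supported_def)

lemma mmul_one_right:
  "supported j A \<Longrightarrow> mmul j A (mdiag j (\<lambda>_. 1)) = A" for A :: "'a::semiring_1 spin_mat"
  by (intro ext) (auto simp: mmul_mdiag_right supported_def)

lemma mmul_mdiag: "mmul j (mdiag j f) (mdiag j g) = mdiag j (\<lambda>a. f a * g a)"
  by (intro ext) (simp add: mmul_mdiag_left, simp add: mdiag_def)

lemma mpow_1: "supported j A \<Longrightarrow> mpow j A 1 = A"
  by (simp add: mmul_one_left)

lemma mpow_mdiag: "mpow j (mdiag j f) k = mdiag j (\<lambda>a. f a ^ k)"
  by (induction k) (simp_all add: mmul_mdiag flip: power_Suc2)

lemma mpow_of_real:
  "mpow j (\<lambda>a b. of_real (A a b)) k = (\<lambda>a b. of_real (mpow j A k a b))"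
proof (induction k)
  case 0
  show ?case by (intro ext) (auto simp: mdiag_def)
next
  case (Suc k)
  then show ?case by (simp add: mmul_of_real)
qed

definition ladder :: "nat \<Rightarrow> int \<Rightarrow> real" where
  "ladder j b = sqrt (real j * (real j + 1) - real_of_int b * (real_of_int b + 1)) / 2"

lemma ladder_radicand_bounds:
  assumes "b \<in> mrange j"
  shows "0 \<le> real_of_int b * (real_of_int b + 1)" "real_of_int b * (real_of_int b + 1) \<le> real j * (real j + 1)"
    "0 \<le> real_of_int b * (real_of_int b - 1)" "real_of_int b * (real_of_int b - 1) \<le> real j * (real j + 1)"
proof -
  define x where "x = real_of_int b"
  have "\<bar>x\<bar> \<le> real j"
    using assms by (auto simp: x_def mrange_def)
  then have "\<bar>x\<bar> * (\<bar>x\<bar> + 1) \<le> real j * (real j + 1)"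
    by (intro mult_mono) auto
  moreover have "x * (x + 1) \<le> \<bar>x\<bar> * (\<bar>x\<bar> + 1)" "x * (x - 1) \<le> \<bar>x\<bar> * (\<bar>x\<bar> + 1)"
    by (cases "x \<ge> 0"; auto simp: algebra_simps)+
  ultimately show "x * (x + 1) \<le> real j * (real j + 1)" "x * (x - 1) \<le> real j * (real j + 1)"
    by linarith+
  have "0 \<le> b * (b + 1)"
    by (cases "b \<ge> 0") (auto simp: mult_nonneg_nonneg mult_nonpos_nonpos)
  then show "0 \<le> x * (x + 1)"
    unfolding x_def by (metis of_int_0_le_iff of_int_1 of_int_add of_int_mult)
  have "0 \<le> b * (b - 1)"
    by (cases "b \<ge> 1") (auto simp: mult_nonneg_nonneg mult_nonpos_nonpos)
  then show "0 \<le> x * (x - 1)"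
    unfolding x_def by (metis of_int_0_le_iff of_int_1 of_int_diff of_int_mult)
qed

lemma Jy_eq_0_outside: "a \<notin> mrange j \<or> b \<notin> mrange j \<Longrightarrow> Jy j a b = 0"
  by (auto simp: Jy_def)

lemma Jy_eq_0_nonadjacent: "a \<noteq> b + 1 \<Longrightarrow> a \<noteq> b - 1 \<Longrightarrow> Jy j a b = 0"
  by (simp add: Jy_def)

lemma supported_Jy: "supported j (Jy j)"
  by (simp add: supported_def Jy_eq_0_outside)

lemma cnj_Jy: "cnj (Jy j a b) = Jy j b a"
  by (auto simp: Jy_def algebra_simps)

lemma norm_Jy_le: "cmod (Jy j a b) \<le> real j + 1"
proof (cases "b \<in> mrange j")
  case True
  have sqrt_le: "sqrt (real j * (real j + 1) - x) \<le> 2 * (real j + 1)"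
    if "0 \<le> x" for x
  proof -
    have "sqrt (real j * (real j + 1) - x) \<le> sqrt ((real j + 1)^2)"
      using that by (intro real_sqrt_le_mono) (auto simp: power2_eq_square algebra_simps)
    then show ?thesis by simp
  qed
  show ?thesis
    using sqrt_le[OF ladder_radicand_bounds(1)[OF True]] sqrt_le[OF ladder_radicand_bounds(3)[OF True]]
      ladder_radicand_bounds(2,4)[OF True]
    by (simp add: Jy_def norm_mult)
qed (simp add: Jy_eq_0_outside)

lemma Jy_pow_0_eq: "Jy_pow j 0 = mdiag j (\<lambda>_. 1)"
  by (intro ext) (simp add: mdiag_def)

lemma Jy_pow_Suc_left: "Jy_pow j (Suc n) = mmul j (Jy j) (Jy_pow j n)"
  by (intro ext) (simp add: mmul_def)

declare Jy_pow.simps [simp del]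

lemma supported_Jy_pow: "supported j (Jy_pow j n)"
  by (induction n) (simp_all add: Jy_pow_0_eq Jy_pow_Suc_left supported_mdiag supported_mmul supported_Jy)

lemma Jy_pow_add: "mmul j (Jy_pow j p) (Jy_pow j q) = Jy_pow j (p + q)"
  by (induction p) (simp_all add: Jy_pow_0_eq mmul_one_left supported_Jy_pow Jy_pow_Suc_left mmul_assoc)

lemma Jy_pow_Suc_right: "Jy_pow j (Suc n) = mmul j (Jy_pow j n) (Jy j)"
proof -
  have "Jy_pow j 1 = Jy j"
    by (simp add: Jy_pow_Suc_left Jy_pow_0_eq mmul_one_right supported_Jy)
  then show ?thesis
    using Jy_pow_add[of j n 1] by simp
qed

lemma cnj_Jy_pow: "cnj (Jy_pow j n a b) = Jy_pow j n b a"
proof (induction n arbitrary: a b)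
  case 0
  then show ?case by (auto simp: Jy_pow_0_eq mdiag_def)
next
  case (Suc n)
  have "cnj (Jy_pow j (Suc n) a b) = mmul j (Jy_pow j n) (Jy j) b a"
    by (simp add: Jy_pow_Suc_left mmul_def cnj_Jy Suc mult.commute)
  then show ?case
    by (simp add: Jy_pow_Suc_right)
qed

lemma norm_Jy_pow_le: "cmod (Jy_pow j n a b) \<le> ((2 * real j + 1) * (real j + 1)) ^ n"
proof (induction n arbitrary: a b)
  case 0
  then show ?case by (simp add: Jy_pow_0_eq mdiag_def)
next
  case (Suc n)
  have "cmod (Jy_pow j (Suc n) a b) \<le> (\<Sum>k\<in>mrange j. cmod (Jy j a k) * cmod (Jy_pow j n k b))"
    unfolding Jy_pow_Suc_left mmul_def by (rule order_trans[OF norm_sum]) (simp add: norm_mult)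
  also have "\<dots> \<le> (\<Sum>k\<in>mrange j. (real j + 1) * ((2 * real j + 1) * (real j + 1)) ^ n)"
    by (intro sum_mono mult_mono norm_Jy_le Suc) auto
  also have "\<dots> = ((2 * real j + 1) * (real j + 1)) ^ Suc n"
    by (simp add: card_mrange)
  finally show ?case .
qed

section \<open>Rotation matrices\<close>

definition exp_coeff :: "real \<Rightarrow> nat \<Rightarrow> complex" where
  "exp_coeff s n = (- \<i> * complex_of_real s) ^ n / of_nat (fact n)"

definition wigner_mat :: "nat \<Rightarrow> real \<Rightarrow> complex spin_mat" where
  "wigner_mat j s = (\<lambda>a b. wigner_d j a b s)"

lemma wigner_mat_eq: "wigner_mat j s a b = (\<Sum>n. exp_coeff s n * Jy_pow j n a b)"
  by (simp add: wigner_mat_def wigner_d_def exp_coeff_def)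

lemma norm_exp_coeff: "cmod (exp_coeff s n) = \<bar>s\<bar> ^ n / fact n"
  by (simp add: exp_coeff_def norm_divide norm_mult norm_power)

lemma summable_norm_exp_bounded:
  fixes f :: "nat \<Rightarrow> 'a::real_normed_vector"
  assumes "\<And>n. norm (f n) \<le> K * x ^ n / fact n"
  shows "summable (\<lambda>n. norm (f n))"
proof (rule summable_comparison_test'[of _ 0])
  show "summable (\<lambda>n. K * (inverse (fact n) * x ^ n))"
    by (intro summable_mult summable_exp)
  show "norm (norm (f n)) \<le> K * (inverse (fact n) * x ^ n)" for n
    using assms[of n] by (simp add: divide_inverse mult_ac)
qed

lemma summable_norm_exp_coeff_mmul_Jy_pow:
  "summable (\<lambda>n. cmod (exp_coeff s n * mmul j (Jy_pow j n) A a b))"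
proof (rule summable_norm_exp_bounded)
  fix n
  let ?L = "(2 * real j + 1) * (real j + 1)"
  have "cmod (mmul j (Jy_pow j n) A a b) \<le> (\<Sum>k\<in>mrange j. ?L ^ n * cmod (A k b))"
    unfolding mmul_def
    by (rule order_trans[OF norm_sum]) (auto simp: norm_mult intro!: sum_mono mult_right_mono norm_Jy_pow_le)
  then have "cmod (exp_coeff s n * mmul j (Jy_pow j n) A a b) \<le> \<bar>s\<bar> ^ n / fact n * (?L ^ n * (\<Sum>k\<in>mrange j. cmod (A k b)))"
    unfolding norm_mult norm_exp_coeff sum_distrib_left[symmetric] by (intro mult_left_mono) auto
  then show "cmod (exp_coeff s n * mmul j (Jy_pow j n) A a b) \<le> (\<Sum>k\<in>mrange j. cmod (A k b)) * (\<bar>s\<bar> * ?L) ^ n / fact n"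
    by (simp add: power_mult_distrib mult_ac)
qed

lemma summable_norm_exp_coeff_Jy_pow: "summable (\<lambda>n. cmod (exp_coeff s n * Jy_pow j n a b))"
  using summable_norm_exp_coeff_mmul_Jy_pow[of s j "mdiag j (\<lambda>_. 1)" a b]
  by (simp add: mmul_one_right supported_Jy_pow)

lemma summable_exp_coeff_Jy_pow: "summable (\<lambda>n. exp_coeff s n * Jy_pow j n a b)"
  using summable_norm_exp_coeff_Jy_pow by (rule summable_norm_cancel)

lemma mmul_wigner_mat_left:
  "mmul j (wigner_mat j s) A a b = (\<Sum>p. exp_coeff s p * mmul j (Jy_pow j p) A a b)"
proof -
  have "mmul j (wigner_mat j s) A a b = (\<Sum>k\<in>mrange j. \<Sum>p. exp_coeff s p * Jy_pow j p a k * A k b)"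
    unfolding mmul_def wigner_mat_eq
    by (rule sum.cong[OF refl], rule suminf_mult2, rule summable_exp_coeff_Jy_pow)
  also have "\<dots> = (\<Sum>p. \<Sum>k\<in>mrange j. exp_coeff s p * Jy_pow j p a k * A k b)"
    by (rule suminf_sum[symmetric], rule summable_mult2, rule summable_exp_coeff_Jy_pow)
  also have "\<dots> = (\<Sum>p. exp_coeff s p * mmul j (Jy_pow j p) A a b)"
    unfolding mmul_def by (simp add: sum_distrib_left mult.assoc)
  finally show ?thesis .
qed

lemma wigner_sandwich:
  "mmul j (mmul j (wigner_mat j s) A) (wigner_mat j t) a b =
     (\<Sum>n. \<Sum>p\<le>n. exp_coeff s p * exp_coeff t (n - p) * mmul j (mmul j (Jy_pow j p) A) (Jy_pow j (n - p)) a b)"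
proof -
  define x where "x l p = exp_coeff s p * mmul j (Jy_pow j p) A a l" for l p
  define y where "y l q = exp_coeff t q * Jy_pow j q l b" for l q
  have sx: "summable (\<lambda>p. cmod (x l p))" for l
    unfolding x_def by (rule summable_norm_exp_coeff_mmul_Jy_pow)
  have sy: "summable (\<lambda>q. cmod (y l q))" for l
    unfolding y_def by (rule summable_norm_exp_coeff_Jy_pow)
  have "mmul j (mmul j (wigner_mat j s) A) (wigner_mat j t) a b = (\<Sum>l\<in>mrange j. (\<Sum>p. x l p) * (\<Sum>q. y l q))"
    unfolding mmul_def[of j "mmul j (wigner_mat j s) A"] mmul_wigner_mat_left x_def y_def
    by (simp add: wigner_mat_eq)
  also have "\<dots> = (\<Sum>l\<in>mrange j. \<Sum>n. \<Sum>p\<le>n. x l p * y l (n - p))"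
    by (rule sum.cong[OF refl], rule Cauchy_product[OF sx sy])
  also have "\<dots> = (\<Sum>n. \<Sum>l\<in>mrange j. \<Sum>p\<le>n. x l p * y l (n - p))"
    by (rule suminf_sum[symmetric], rule sums_summable[OF Cauchy_product_sums[OF sx sy]])
  also have "\<dots> = (\<Sum>n. \<Sum>p\<le>n. exp_coeff s p * exp_coeff t (n - p) * mmul j (mmul j (Jy_pow j p) A) (Jy_pow j (n - p)) a b)"
    unfolding x_def y_def mmul_def[of j "mmul j (Jy_pow j _) A"]
    by (simp add: sum.swap[of _ "mrange j"] sum_distrib_left mult_ac)
  finally show ?thesis .
qed

lemma exp_coeff_mult:
  assumes "p \<le> n"
  shows "exp_coeff s p * exp_coeff t (n - p) =
    of_nat (n choose p) * (- \<i> * complex_of_real s) ^ p * (- \<i> * complex_of_real t) ^ (n - p) / of_nat (fact n)"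
proof -
  have "(fact n :: complex) = fact p * (fact (n - p) * of_nat (n choose p))"
    using arg_cong[OF binomial_fact_lemma[OF assms], of "of_nat :: nat \<Rightarrow> complex"] by (simp add: mult_ac)
  then show ?thesis
    unfolding exp_coeff_def using assms by (simp add: field_simps)
qed

lemma exp_coeff_add: "exp_coeff (s + t) n = (\<Sum>p\<le>n. exp_coeff s p * exp_coeff t (n - p))"
proof -
  have "(\<Sum>p\<le>n. exp_coeff s p * exp_coeff t (n - p)) =
      (\<Sum>p\<le>n. of_nat (n choose p) * (- \<i> * complex_of_real s) ^ p * (- \<i> * complex_of_real t) ^ (n - p))
      / of_nat (fact n)"
    by (simp add: exp_coeff_mult sum_divide_distrib)
  also have "\<dots> = exp_coeff (s + t) n"
    unfolding binomial_ring[symmetric] exp_coeff_def by (simp add: algebra_simps)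
  finally show ?thesis ..
qed

lemma supported_wigner_mat: "supported j (wigner_mat j s)"
  using supported_Jy_pow[of j] by (simp add: supported_def wigner_mat_eq)

lemma wigner_mat_add: "mmul j (wigner_mat j s) (wigner_mat j t) = wigner_mat j (s + t)"
proof (intro ext)
  fix a b
  have "mmul j (wigner_mat j s) (wigner_mat j t) a b =
      mmul j (mmul j (wigner_mat j s) (mdiag j (\<lambda>_. 1))) (wigner_mat j t) a b"
    by (simp add: mmul_one_right supported_wigner_mat)
  also have "\<dots> = (\<Sum>n. (\<Sum>p\<le>n. exp_coeff s p * exp_coeff t (n - p)) * Jy_pow j n a b)"
    unfolding wigner_sandwich
    by (simp add: mmul_one_right supported_Jy_pow Jy_pow_add sum_distrib_right)
  also have "\<dots> = (\<Sum>n. exp_coeff (s + t) n * Jy_pow j n a b)"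
    by (simp add: exp_coeff_add)
  finally show "mmul j (wigner_mat j s) (wigner_mat j t) a b = wigner_mat j (s + t) a b"
    by (simp add: wigner_mat_eq)
qed

lemma wigner_mat_0: "wigner_mat j 0 = mdiag j (\<lambda>_. 1)"
proof (intro ext)
  fix a b
  have "wigner_mat j 0 a b = (\<Sum>n\<in>{0}. exp_coeff 0 n * Jy_pow j n a b)"
    unfolding wigner_mat_eq by (rule suminf_finite) (auto simp: exp_coeff_def)
  then show "wigner_mat j 0 a b = mdiag j (\<lambda>_. 1) a b"
    by (simp add: exp_coeff_def Jy_pow_0_eq)
qed

lemma wigner_mat_inverse: "mmul j (wigner_mat j t) (wigner_mat j (- t)) = mdiag j (\<lambda>_. 1)"
  by (simp add: wigner_mat_add wigner_mat_0)

lemma cnj_wigner_mat: "cnj (wigner_mat j t a b) = wigner_mat j (- t) b a"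
proof -
  have "(\<lambda>n. cnj (exp_coeff t n * Jy_pow j n a b)) sums cnj (wigner_mat j t a b)"
    unfolding sums_cnj wigner_mat_eq by (rule summable_sums[OF summable_exp_coeff_Jy_pow])
  moreover have "cnj (exp_coeff t n * Jy_pow j n a b) = exp_coeff (- t) n * Jy_pow j n b a" for n
    by (simp add: exp_coeff_def cnj_Jy_pow)
  ultimately show ?thesis
    by (simp add: wigner_mat_eq sums_iff)
qed

section \<open>Rotating J_z\<close>

definition ad_Jy :: "nat \<Rightarrow> complex spin_mat \<Rightarrow> complex spin_mat" where
  "ad_Jy j B = (\<lambda>a b. \<i> * (mmul j (Jy j) B a b - mmul j B (Jy j) a b))"

lemma ad_Jy_scale: "ad_Jy j (\<lambda>a b. c * B a b) = (\<lambda>a b. c * ad_Jy j B a b)"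
  by (intro ext) (simp add: ad_Jy_def mmul_scale_left mmul_scale_right algebra_simps)

lemma ad_Jy_uminus: "ad_Jy j (\<lambda>a b. - B a b) = (\<lambda>a b. - ad_Jy j B a b)"
  by (intro ext) (simp add: ad_Jy_def mmul_def sum_negf algebra_simps)

lemma sum_binomial_pascal:
  fixes g :: "nat \<Rightarrow> nat \<Rightarrow> 'a::comm_semiring_1"
  shows "(\<Sum>p\<le>n. of_nat (n choose p) * (g (Suc p) (n - p) + g p (Suc n - p))) =
         (\<Sum>p\<le>Suc n. of_nat (Suc n choose p) * g p (Suc n - p))"
proof -
  have "(\<Sum>p\<le>n. of_nat (n choose p) * g p (Suc n - p)) = (\<Sum>p\<le>Suc n. of_nat (n choose p) * g p (Suc n - p))"
    by (simp add: binomial_eq_0)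
  also have "\<dots> = g 0 (Suc n) + (\<Sum>p\<le>n. of_nat (n choose Suc p) * g (Suc p) (n - p))"
    by (subst sum.atMost_Suc_shift) simp
  moreover have "(\<Sum>p\<le>Suc n. of_nat (Suc n choose p) * g p (Suc n - p)) =
      g 0 (Suc n) + (\<Sum>p\<le>n. of_nat (n choose p) * g (Suc p) (n - p))
        + (\<Sum>p\<le>n. of_nat (n choose Suc p) * g (Suc p) (n - p))"
    by (subst sum.atMost_Suc_shift) (simp add: sum.distrib algebra_simps)
  ultimately show ?thesis
    by (simp add: sum.distrib algebra_simps binomial_eq_0)
qed

lemma ad_Jy_funpow:
  assumes "supported j A"
  shows "(ad_Jy j ^^ n) A = (\<lambda>a b. \<Sum>p\<le>n. of_nat (n choose p) *
           (\<i> ^ p * (- \<i>) ^ (n - p) * mmul j (mmul j (Jy_pow j p) A) (Jy_pow j (n - p)) a b))"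
proof (induction n)
  case 0
  show ?case
    using assms by (simp add: Jy_pow_0_eq mmul_one_left mmul_one_right)
next
  case (Suc n)
  have Jy_left: "mmul j (Jy j) (mmul j (mmul j (Jy_pow j p) A) (Jy_pow j q)) =
      mmul j (mmul j (Jy_pow j (Suc p)) A) (Jy_pow j q)" for p q
    by (simp add: mmul_assoc Jy_pow_Suc_left)
  have Jy_right: "mmul j (mmul j (mmul j (Jy_pow j p) A) (Jy_pow j q)) (Jy j) =
      mmul j (mmul j (Jy_pow j p) A) (Jy_pow j (Suc q))" for p q
    by (simp add: mmul_assoc Jy_pow_Suc_right)
  show ?case
  proof (intro ext)
    fix a b
    define g where "g p q = \<i> ^ p * (- \<i>) ^ q * mmul j (mmul j (Jy_pow j p) A) (Jy_pow j q) a b" for p q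
    have "ad_Jy j ((ad_Jy j ^^ n) A) a b =
        (\<Sum>p\<le>n. of_nat (n choose p) * (g (Suc p) (n - p) + g p (Suc n - p)))"
      unfolding Suc ad_Jy_def mmul_sum_left mmul_sum_right mmul_scale_left mmul_scale_right Jy_left Jy_right
      by (simp add: g_def sum_distrib_left algebra_simps Suc_diff_le sum_subtractf[symmetric])
    then show "(ad_Jy j ^^ Suc n) A a b = (\<Sum>p\<le>Suc n. of_nat (Suc n choose p) *
           (\<i> ^ p * (- \<i>) ^ (Suc n - p) * mmul j (mmul j (Jy_pow j p) A) (Jy_pow j (Suc n - p)) a b))"
      unfolding sum_binomial_pascal by (simp add: g_def)
  qed
qed

lemma wigner_conj:
  assumes "supported j A"
  shows "mmul j (mmul j (wigner_mat j (- t)) A) (wigner_mat j t) a b =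
    (\<Sum>n. complex_of_real t ^ n / of_nat (fact n) * (ad_Jy j ^^ n) A a b)"
  unfolding wigner_sandwich
proof (intro arg_cong[where f=suminf] ext)
  fix n
  have "exp_coeff (- t) p * exp_coeff t (n - p) =
      complex_of_real t ^ n / of_nat (fact n) * (of_nat (n choose p) * (\<i> ^ p * (- \<i>) ^ (n - p)))"
    if "p \<le> n" for p
  proof -
    have split: "complex_of_real t ^ n = complex_of_real t ^ p * complex_of_real t ^ (n - p)"
      using that by (simp flip: power_add)
    have neg: "- \<i> * complex_of_real (- t) = \<i> * complex_of_real t"
      by simp
    show ?thesis
      unfolding exp_coeff_mult[OF that] neg power_mult_distrib split by (simp add: algebra_simps)
  qed
  then show "(\<Sum>p\<le>n. exp_coeff (- t) p * exp_coeff t (n - p) * mmul j (mmul j (Jy_pow j p) A) (Jy_pow j (n - p)) a b) =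
        complex_of_real t ^ n / of_nat (fact n) * (ad_Jy j ^^ n) A a b"
    by (simp add: ad_Jy_funpow[OF assms] sum_distrib_left mult.assoc)
qed

definition Jz :: "nat \<Rightarrow> complex spin_mat" where
  "Jz j = mdiag j of_int"

text \<open>Multiplying the entry (a, b) of J_y = (J_+ - J_-)/(2i) by i(a - b) flips the sign of its
  J_- part, giving J_x = (J_+ + J_-)/2.\<close>

definition Jx :: "nat \<Rightarrow> complex spin_mat" where
  "Jx j = (\<lambda>a b. \<i> * of_int (a - b) * Jy j a b)"

lemma supported_Jz: "supported j (Jz j)"
  by (simp add: Jz_def supported_mdiag)

lemma Jx_succ_left:
  "Jx j (b + 1) b = (if b \<in> mrange j \<and> b + 1 \<in> mrange j then complex_of_real (ladder j b) else 0)"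
  by (simp add: Jx_def Jy_def ladder_def)

lemma Jx_succ_right:
  "Jx j a (a + 1) = (if a \<in> mrange j \<and> a + 1 \<in> mrange j then complex_of_real (ladder j a) else 0)"
proof -
  have "real_of_int (a + 1) * (real_of_int (a + 1) - 1) = real_of_int a * (real_of_int a + 1)"
    by (simp add: algebra_simps)
  then show ?thesis
    by (simp add: Jx_def Jy_def ladder_def)
qed

lemma Jx_eq_0_nonadjacent: "a \<noteq> b + 1 \<Longrightarrow> b \<noteq> a + 1 \<Longrightarrow> Jx j a b = 0"
  by (auto simp: Jx_def Jy_def)

lemma ad_Jy_Jz: "ad_Jy j (Jz j) = (\<lambda>a b. - Jx j a b)"
  by (intro ext) (auto simp: ad_Jy_def Jz_def mmul_mdiag_left mmul_mdiag_right Jx_def Jy_eq_0_outside algebra_simps)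

lemma Jy_mult_Jy_pred:
  assumes "a \<in> mrange j"
  shows "Jy j a (a - 1) * Jy j (a - 1) a =
    complex_of_real ((real j * (real j + 1) - real_of_int a * (real_of_int a - 1)) / 4)"
proof (cases "a - 1 \<in> mrange j")
  case True
  let ?r = "real j * (real j + 1) - real_of_int a * (real_of_int a - 1)"
  have "Jy j a (a - 1) * Jy j (a - 1) a = complex_of_real (sqrt ?r) * complex_of_real (sqrt ?r) / 4"
    using assms True by (simp add: Jy_def algebra_simps)
  moreover have "sqrt ?r * sqrt ?r = ?r"
    using ladder_radicand_bounds(4)[OF assms] by simp
  ultimately show ?thesis
    by (simp flip: of_real_mult)
next
  case False
  then have "a = - int j"
    using assms by (auto simp: mrange_def)
  then show ?thesis
    using False by (simp add: Jy_eq_0_outside algebra_simps)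
qed

lemma Jy_mult_Jy_succ:
  assumes "a \<in> mrange j"
  shows "Jy j a (a + 1) * Jy j (a + 1) a =
    complex_of_real ((real j * (real j + 1) - real_of_int a * (real_of_int a + 1)) / 4)"
proof (cases "a + 1 \<in> mrange j")
  case True
  let ?r = "real j * (real j + 1) - real_of_int a * (real_of_int a + 1)"
  have "Jy j a (a + 1) * Jy j (a + 1) a = complex_of_real (sqrt ?r) * complex_of_real (sqrt ?r) / 4"
    using assms True by (simp add: Jy_def algebra_simps)
  moreover have "sqrt ?r * sqrt ?r = ?r"
    using ladder_radicand_bounds(2)[OF assms] by simp
  ultimately show ?thesis
    by (simp flip: of_real_mult)
next
  case False
  then have "a = int j"
    using assms by (auto simp: mrange_def)
  then show ?thesis
    using False by (simp add: Jy_eq_0_outside algebra_simps)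
qed

lemma ad_Jy_Jx: "ad_Jy j (Jx j) = Jz j"
proof (intro ext)
  fix a b
  define f where "f k = complex_of_int (2 * k - a - b) * (Jy j a k * Jy j k b)" for k
  have "ad_Jy j (Jx j) a b =
      (\<Sum>k\<in>mrange j. \<i> * (Jy j a k * (\<i> * of_int (k - b) * Jy j k b) - \<i> * of_int (a - k) * Jy j a k * Jy j k b))"
    unfolding ad_Jy_def mmul_def Jx_def by (simp only: sum_subtractf[symmetric] sum_distrib_left)
  also have "\<dots> = - (\<Sum>k\<in>mrange j. f k)"
    unfolding sum_negf[symmetric] by (rule sum.cong) (simp_all add: f_def algebra_simps)
  also have "(\<Sum>k\<in>mrange j. f k) = f (a - 1) + f (a + 1)"
    by (rule sum_mrange_two) (auto simp: f_def Jy_eq_0_outside Jy_eq_0_nonadjacent)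
  also have "- (f (a - 1) + f (a + 1)) = Jz j a b"
  proof (cases "a \<in> mrange j \<and> b = a")
    case True
    then have a: "a \<in> mrange j" and b: "b = a"
      by auto
    have "- (f (a - 1) + f (a + 1)) = 2 * (Jy j a (a - 1) * Jy j (a - 1) a) - 2 * (Jy j a (a + 1) * Jy j (a + 1) a)"
      unfolding f_def b by (simp add: algebra_simps)
    also have "\<dots> = complex_of_real (2 * ((real j * (real j + 1) - real_of_int a * (real_of_int a - 1)) / 4) -
        2 * ((real j * (real j + 1) - real_of_int a * (real_of_int a + 1)) / 4))"
      unfolding Jy_mult_Jy_pred[OF a] Jy_mult_Jy_succ[OF a] by simp
    also have "\<dots> = of_int a"
      by (simp add: field_simps)
    finally show ?thesis
      using a b by (simp add: Jz_def mdiag_def)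
  next
    case False
    then have "a \<notin> mrange j \<or> (b \<noteq> a \<and> (b = a + 2 \<or> b = a - 2 \<or> (b \<noteq> a + 2 \<and> b \<noteq> a - 2)))"
      by auto
    then show ?thesis
      by (elim disjE conjE) (simp_all add: f_def Jz_def mdiag_def Jy_eq_0_outside Jy_eq_0_nonadjacent)
  qed
  finally show "ad_Jy j (Jx j) a b = Jz j a b" .
qed

lemma ad_Jy_funpow_Jz:
  "(ad_Jy j ^^ n) (Jz j) =
    (\<lambda>a b. if even n then (- 1) ^ (n div 2) * Jz j a b else (- 1) ^ (n div 2 + 1) * Jx j a b)"
proof (induction n)
  case 0
  then show ?case by simp
next
  case (Suc n)
  show ?case
  proof (cases "even n")
    case True
    then show ?thesis
      by (simp add: Suc ad_Jy_scale ad_Jy_Jz)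
  next
    case False
    then have "Suc n div 2 = n div 2 + 1"
      by presburger
    with False show ?thesis
      by (simp add: Suc ad_Jy_scale ad_Jy_uminus ad_Jy_Jx)
  qed
qed

lemma ad_Jy_funpow_Jz_coeff:
  "complex_of_real t ^ n / of_nat (fact n) * (ad_Jy j ^^ n) (Jz j) a b =
      complex_of_real (cos_coeff n * t ^ n) * Jz j a b - complex_of_real (sin_coeff n * t ^ n) * Jx j a b"
proof (cases "even n")
  case True
  then have A: "(ad_Jy j ^^ n) (Jz j) a b = (- 1) ^ (n div 2) * Jz j a b"
    and B: "cos_coeff n = (- 1) ^ (n div 2) / fact n" and C: "sin_coeff n = 0"
    by (simp_all only: ad_Jy_funpow_Jz if_True cos_coeff_def sin_coeff_def)
  show ?thesis
    unfolding A B C by (simp add: field_simps)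
next
  case False
  have A: "(ad_Jy j ^^ n) (Jz j) a b = (- 1) ^ (n div 2 + 1) * Jx j a b"
    using False by (simp only: ad_Jy_funpow_Jz if_False)
  have B: "cos_coeff n = 0"
    using False by (simp add: cos_coeff_def)
  have "(n - Suc 0) div 2 = n div 2"
    using False by presburger
  with False have C: "sin_coeff n = (- 1) ^ (n div 2) / fact n"
    by (simp add: sin_coeff_def)
  show ?thesis
    unfolding A B C by (simp add: field_simps)
qed

lemma wigner_conj_Jz:
  "mmul j (mmul j (wigner_mat j (- t)) (Jz j)) (wigner_mat j t) =
    (\<lambda>a b. complex_of_real (cos t) * Jz j a b - complex_of_real (sin t) * Jx j a b)"
proof (intro ext)
  fix a b
  have "(\<lambda>n. complex_of_real (cos_coeff n * t ^ n) * Jz j a b) sums (complex_of_real (cos t) * Jz j a b)"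
    by (intro sums_mult2 sums_of_real) (use cos_converges[of t] in simp)
  moreover have "(\<lambda>n. complex_of_real (sin_coeff n * t ^ n) * Jx j a b) sums (complex_of_real (sin t) * Jx j a b)"
    by (intro sums_mult2 sums_of_real) (use sin_converges[of t] in simp)
  ultimately have "(\<lambda>n. complex_of_real t ^ n / of_nat (fact n) * (ad_Jy j ^^ n) (Jz j) a b) sums
      (complex_of_real (cos t) * Jz j a b - complex_of_real (sin t) * Jx j a b)"
    unfolding ad_Jy_funpow_Jz_coeff by (rule sums_diff)
  then show "mmul j (mmul j (wigner_mat j (- t)) (Jz j)) (wigner_mat j t) a b =
      complex_of_real (cos t) * Jz j a b - complex_of_real (sin t) * Jx j a b"
    unfolding wigner_conj[OF supported_Jz] by (rule sums_unique[symmetric])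
qed

definition rotated_Jz :: "nat \<Rightarrow> real \<Rightarrow> real \<Rightarrow> real spin_mat" where
  "rotated_Jz j c s = (\<lambda>a b. if a \<in> mrange j \<and> b \<in> mrange j then
      (if a = b then c * real_of_int a else if a = b + 1 then - s * ladder j b
       else if b = a + 1 then - s * ladder j a else 0)
    else 0)"

lemma supported_rotated_Jz: "supported j (rotated_Jz j c s)"
  by (simp add: supported_def rotated_Jz_def)

lemma rotated_Jz_eq_0: "b \<noteq> a - 1 \<Longrightarrow> b \<noteq> a \<Longrightarrow> b \<noteq> a + 1 \<Longrightarrow> rotated_Jz j c s a b = 0"
  by (auto simp: rotated_Jz_def)

lemma wigner_conj_Jz_real:
  "mmul j (mmul j (wigner_mat j (- t)) (Jz j)) (wigner_mat j t) =
    (\<lambda>a b. complex_of_real (rotated_Jz j (cos t) (sin t) a b))"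
proof (intro ext)
  fix a b :: int
  consider "a = b" | "a = b + 1" | "b = a + 1" | "a \<noteq> b \<and> a \<noteq> b + 1 \<and> b \<noteq> a + 1"
    by blast
  then show "mmul j (mmul j (wigner_mat j (- t)) (Jz j)) (wigner_mat j t) a b =
      complex_of_real (rotated_Jz j (cos t) (sin t) a b)"
    unfolding wigner_conj_Jz
    by cases (simp_all add: rotated_Jz_def Jz_def mdiag_def Jx_succ_left Jx_succ_right
        Jx_eq_0_nonadjacent)
qed

section \<open>Moments of the rotated state\<close>

lemma wigner_conj_mpow:
  assumes "supported j A"
  shows "mmul j (mmul j (wigner_mat j (- t)) (mpow j A k)) (wigner_mat j t) =
    mpow j (mmul j (mmul j (wigner_mat j (- t)) A) (wigner_mat j t)) k"
proof (induction k)
  case 0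
  show ?case
    by (simp add: mmul_one_right supported_wigner_mat wigner_mat_add wigner_mat_0)
next
  case (Suc k)
  let ?D = "wigner_mat j t" and ?D' = "wigner_mat j (- t)"
  have "supported j (mmul j A ?D)"
    by (intro supported_mmul assms supported_wigner_mat)
  then have "mmul j (mmul j ?D' (mpow j A (Suc k))) ?D =
      mmul j (mmul j ?D' (mpow j A k)) (mmul j (mmul j ?D ?D') (mmul j A ?D))"
    by (simp add: wigner_mat_inverse mmul_one_left mmul_assoc)
  also have "\<dots> = mmul j (mmul j (mmul j ?D' (mpow j A k)) ?D) (mmul j (mmul j ?D' A) ?D)"
    by (simp only: mmul_assoc)
  finally show ?case
    by (simp add: Suc)
qed

lemma sum_wigner_sq_power:
  "(\<Sum>a\<in>mrange j. (cmod (wigner_mat j t a m))\<^sup>2 * real_of_int a ^ k) =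
    mpow j (rotated_Jz j (cos t) (sin t)) k m m"
proof -
  have "complex_of_real (\<Sum>a\<in>mrange j. (cmod (wigner_mat j t a m))\<^sup>2 * real_of_int a ^ k) =
      mmul j (mmul j (wigner_mat j (- t)) (mdiag j (\<lambda>a. of_int a ^ k))) (wigner_mat j t) m m"
    unfolding mmul_def[of j "mmul j _ _"] mmul_mdiag_right
    by (auto simp: cnj_wigner_mat[symmetric] complex_mult_cnj cmod_power2 mult_ac intro!: sum.cong)
  also have "\<dots> = complex_of_real (mpow j (rotated_Jz j (cos t) (sin t)) k m m)"
    using wigner_conj_mpow[OF supported_Jz, where t=t and k=k]
    by (simp add: Jz_def mpow_mdiag wigner_conj_Jz_real[unfolded Jz_def] mpow_of_real)
  finally show ?thesis
    by (simp only: of_real_eq_iff)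
qed

context
  fixes c s :: real and j :: nat and m :: int
  assumes in_range: "m - 2 \<in> mrange j" "m + 2 \<in> mrange j"
begin

private abbreviation "g \<equiv> rotated_Jz j c s"

private lemma near_in_range: "m - 1 \<in> mrange j" "m \<in> mrange j" "m + 1 \<in> mrange j"
  using in_range by (auto simp: mrange_def)

private lemma mmul_g_g_col: "mmul j g g a m = (\<Sum>k\<in>{m - 1, m, m + 1}. g a k * g k m)"
  unfolding mmul_def
  by (rule sum_mrange_subset) (use near_in_range in \<open>auto simp: rotated_Jz_eq_0[of m]\<close>)

private lemma mmul_g_g_row: "mmul j g g m a = (\<Sum>k\<in>{m - 1, m, m + 1}. g m k * g k a)"
  unfolding mmul_def
  by (rule sum_mrange_subset) (use near_in_range in \<open>auto simp: rotated_Jz_eq_0[of _ m]\<close>)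

private lemma mpow_g_unfold:
  "mpow j g 2 = mmul j g g" "mpow j g 3 = mmul j (mmul j g g) g"
  "mpow j g 4 = mmul j (mmul j g g) (mmul j g g)"
  by (simp_all add: numeral_eq_Suc mmul_one_left supported_rotated_Jz mmul_assoc)

lemma rotated_Jz_moments:
  "mpow j g 0 m m = 1"
  "mpow j g 1 m m = c * real_of_int m"
  "mpow j g 2 m m = c^2 * (real_of_int m)^2 + s^2 * ((ladder j (m - 1))^2 + (ladder j m)^2)"
  "mpow j g 3 m m = c^3 * (real_of_int m)^3 +
     c * s^2 * ((3 * real_of_int m + 1) * (ladder j m)^2 + (3 * real_of_int m - 1) * (ladder j (m - 1))^2)"
  "mpow j g 4 m m =
     s^4 * (ladder j (m + 1))^2 * (ladder j m)^2 + c^2 * s^2 * (ladder j m)^2 * (2 * real_of_int m + 1)^2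
     + (c^2 * (real_of_int m)^2 + s^2 * ((ladder j (m - 1))^2 + (ladder j m)^2))^2
     + c^2 * s^2 * (ladder j (m - 1))^2 * (2 * real_of_int m - 1)^2
     + s^4 * (ladder j (m - 2))^2 * (ladder j (m - 1))^2"
proof -
  show "mpow j g 0 m m = 1"
    using near_in_range by (simp add: mdiag_def)
  show "mpow j g 1 m m = c * real_of_int m"
    unfolding mpow_1[OF supported_rotated_Jz] using near_in_range by (simp add: rotated_Jz_def)
  show "mpow j g 2 m m = c^2 * (real_of_int m)^2 + s^2 * ((ladder j (m - 1))^2 + (ladder j m)^2)"
    unfolding mpow_g_unfold mmul_g_g_col
    using near_in_range by (simp add: rotated_Jz_def power2_eq_square algebra_simps)
  have "mmul j (mmul j g g) g m m = (\<Sum>a\<in>{m - 1, m, m + 1}. mmul j g g m a * g a m)"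
    unfolding mmul_def[of j "mmul j g g"]
    by (rule sum_mrange_subset) (use near_in_range in \<open>auto simp: rotated_Jz_eq_0[of m]\<close>)
  then show "mpow j g 3 m m = c^3 * (real_of_int m)^3 +
     c * s^2 * ((3 * real_of_int m + 1) * (ladder j m)^2 + (3 * real_of_int m - 1) * (ladder j (m - 1))^2)"
    unfolding mpow_g_unfold mmul_g_g_row using near_in_range
    by (simp add: rotated_Jz_def power2_eq_square power3_eq_cube algebra_simps)
  have far: "mmul j g g m a = 0" if "a \<notin> {m - 2, m - 1, m, m + 1, m + 2}" for a
    unfolding mmul_g_g_row using that by (auto simp: rotated_Jz_eq_0)
  have "mmul j (mmul j g g) (mmul j g g) m m =
      (\<Sum>a\<in>{m - 2, m - 1, m, m + 1, m + 2}. mmul j g g m a * mmul j g g a m)"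
    unfolding mmul_def[of j "mmul j g g" "mmul j g g"]
    by (rule sum_mrange_subset) (use in_range near_in_range far in auto)
  then show "mpow j g 4 m m =
     s^4 * (ladder j (m + 1))^2 * (ladder j m)^2 + c^2 * s^2 * (ladder j m)^2 * (2 * real_of_int m + 1)^2
     + (c^2 * (real_of_int m)^2 + s^2 * ((ladder j (m - 1))^2 + (ladder j m)^2))^2
     + c^2 * s^2 * (ladder j (m - 1))^2 * (2 * real_of_int m - 1)^2
     + s^4 * (ladder j (m - 2))^2 * (ladder j (m - 1))^2"
    unfolding mpow_g_unfold mmul_g_g_row mmul_g_g_col using in_range near_in_range
    by (simp add: rotated_Jz_def power2_eq_square power4_eq_xxxx algebra_simps)
qed

end

definition ratio_moment :: "nat \<Rightarrow> int \<Rightarrow> nat \<Rightarrow> real" where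
  "ratio_moment j m k =
    (\<Sum>a\<in>mrange j. (cmod (wigner_d j a m (arcsin (real_of_int m / real j))))\<^sup>2 * (real_of_int a / real_of_int m) ^ k)"

lemma ratio_moment_eq_mpow:
  assumes "1 \<le> m" "m \<le> int j"
  shows "ratio_moment j m k =
    mpow j (rotated_Jz j (cos (arcsin (real_of_int m / real j))) (real_of_int m / real j)) k m m / real_of_int m ^ k"
proof -
  have "sin (arcsin (real_of_int m / real j)) = real_of_int m / real j"
    using assms by (intro sin_arcsin) (auto simp: field_simps)
  then show ?thesis
    unfolding ratio_moment_def power_divide sum_divide_distrib[symmetric] times_divide_eq_right
    using sum_wigner_sq_power[of j "arcsin (real_of_int m / real j)" m k]
    by (simp add: wigner_mat_def)
qed

definition scaled_ladder_sq :: "nat \<Rightarrow> int \<Rightarrow> real" where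
  "scaled_ladder_sq j b = (ladder j b / real j)^2"

definition moment_poly :: "nat \<Rightarrow> real \<Rightarrow> real \<Rightarrow> real \<Rightarrow> real \<Rightarrow> real \<Rightarrow> real \<Rightarrow> real" where
  "moment_poly k c \<mu> vm2 vm1 v0 vp1 =
    [1, c, c^2 + vm1 + v0, c^3 + c * ((3 + \<mu>) * v0 + (3 - \<mu>) * vm1),
     vp1 * v0 + c^2 * v0 * (2 + \<mu>)^2 + (c^2 + vm1 + v0)^2 + c^2 * vm1 * (2 - \<mu>)^2 + vm2 * vm1] ! k"

lemma le_4_cases:
  fixes k :: nat
  assumes "k \<le> 4"
  obtains "k = 0" | "k = 1" | "k = 2" | "k = 3" | "k = 4"
  using assms by linarith

lemma ratio_moment_formula:
  assumes m: "1 \<le> m" "m + 2 \<le> int j" and "k \<le> 4"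
  shows "ratio_moment j m k = moment_poly k (cos (arcsin (real_of_int m / real j))) (1 / real_of_int m)
    (scaled_ladder_sq j (m - 2)) (scaled_ladder_sq j (m - 1)) (scaled_ladder_sq j m) (scaled_ladder_sq j (m + 1))"
proof -
  define c where "c = cos (arcsin (real_of_int m / real j))"
  have in_range: "m - 2 \<in> mrange j" "m + 2 \<in> mrange j"
    using m by (auto simp: mrange_def)
  have pos: "0 < real_of_int m" "0 < real j"
    using m by simp_all
  have eq: "ratio_moment j m k = mpow j (rotated_Jz j c (real_of_int m / real j)) k m m / real_of_int m ^ k" for k
    unfolding c_def using m by (intro ratio_moment_eq_mpow) simp_all
  note moments = rotated_Jz_moments[OF in_range, where c = c and s = "real_of_int m / real j"]
  from \<open>k \<le> 4\<close> have "ratio_moment j m k = moment_poly k c (1 / real_of_int m)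
    (scaled_ladder_sq j (m - 2)) (scaled_ladder_sq j (m - 1)) (scaled_ladder_sq j m) (scaled_ladder_sq j (m + 1))"
  proof (cases rule: le_4_cases)
    case 1
    show ?thesis
      unfolding 1 eq moments by (simp add: moment_poly_def)
  next
    case 2
    show ?thesis
      unfolding 2 eq moments using pos by (simp add: moment_poly_def)
  next
    case 3
    then show ?thesis
      using pos by (simp add: eq moments moment_poly_def scaled_ladder_sq_def field_simps)
  next
    case 4
    then show ?thesis
      using pos by (simp add: eq moments moment_poly_def scaled_ladder_sq_def field_simps)
        (simp add: algebra_simps power2_eq_square power3_eq_cube)
  next
    case 5
    then show ?thesis
      using pos by (simp add: eq moments moment_poly_def scaled_ladder_sq_def field_simps)
        (simp add: algebra_simps power2_eq_square eval_nat_numeral)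
  qed
  then show ?thesis
    by (simp add: c_def)
qed

lemma tendsto_moment_poly:
  assumes "k \<le> 4" "(c \<longlongrightarrow> c') F" "(\<mu> \<longlongrightarrow> \<mu>') F" "(vm2 \<longlongrightarrow> vm2') F" "(vm1 \<longlongrightarrow> vm1') F"
    "(v0 \<longlongrightarrow> v0') F" "(vp1 \<longlongrightarrow> vp1') F"
  shows "((\<lambda>x. moment_poly k (c x) (\<mu> x) (vm2 x) (vm1 x) (v0 x) (vp1 x)) \<longlongrightarrow> moment_poly k c' \<mu>' vm2' vm1' v0' vp1') F"
  using assms(1) by (cases rule: le_4_cases) (simp_all add: moment_poly_def numeral_eq_Suc tendsto_intros assms(2-))

section \<open>Asymptotics\<close>

lemma scaled_ladder_sq_eq:
  assumes "\<bar>b\<bar> \<le> int j" "0 < j"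
  shows "scaled_ladder_sq j b = (1 + 1 / real j) / 4 - real_of_int b * (real_of_int b + 1) / (4 * (real j)^2)"
proof -
  have "b \<in> mrange j"
    using assms by (auto simp: mrange_def)
  then have "0 \<le> real j * (real j + 1) - real_of_int b * (real_of_int b + 1)"
    using ladder_radicand_bounds(2) by simp
  then show ?thesis
    unfolding scaled_ladder_sq_def ladder_def using assms(2)
    by (simp add: power_divide field_simps power2_eq_square)
qed

lemma sqrt_add_le_self: "4 \<le> j \<Longrightarrow> sqrt (real j) + 2 \<le> real j"
proof -
  assume "4 \<le> j"
  then have "2 \<le> sqrt (real j)"
    using real_sqrt_le_mono[of 4 "real j"] by simp
  then have "2 * sqrt (real j) \<le> sqrt (real j) * sqrt (real j)"
    by (intro mult_right_mono) auto
  with \<open>2 \<le> sqrt (real j)\<close> show ?thesis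
    by simp
qed

lemma scaled_ladder_sq_tendsto:
  assumes "\<forall>\<^sub>F j in sequentially. \<bar>real_of_int (b j)\<bar> \<le> sqrt (real j) + 2"
  shows "((\<lambda>j. scaled_ladder_sq j (b j)) \<longlongrightarrow> 1/4) sequentially"
proof -
  let ?q = "\<lambda>j. real_of_int (b j) * (real_of_int (b j) + 1) / (4 * (real j)^2)"
  have eq: "\<forall>\<^sub>F j in sequentially. scaled_ladder_sq j (b j) = (1 + 1 / real j) / 4 - ?q j"
    using assms eventually_ge_at_top[of 4]
  proof eventually_elim
    case (elim j)
    then have "\<bar>b j\<bar> \<le> int j"
      using sqrt_add_le_self[of j] by linarith
    with elim show ?case
      by (intro scaled_ladder_sq_eq) auto
  qed
  have "\<forall>\<^sub>F j in sequentially. norm (?q j) \<le> (sqrt (real j) + 2) * (sqrt (real j) + 3) / (real j)^2"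
    using assms eventually_ge_at_top[of 1]
  proof eventually_elim
    case (elim j)
    have "\<bar>real_of_int (b j) * (real_of_int (b j) + 1)\<bar> \<le> (sqrt (real j) + 2) * (sqrt (real j) + 3)"
      unfolding abs_mult using elim(1) by (intro mult_mono) auto
    then have "norm (?q j) \<le> (sqrt (real j) + 2) * (sqrt (real j) + 3) / (4 * (real j)^2)"
      by (simp add: abs_divide divide_right_mono)
    also have "\<dots> \<le> (sqrt (real j) + 2) * (sqrt (real j) + 3) / (real j)^2"
      using elim(2) by (intro divide_left_mono) auto
    finally show ?case .
  qed
  moreover have "((\<lambda>j. (sqrt (real j) + 2) * (sqrt (real j) + 3) / (real j)^2) \<longlongrightarrow> 0) sequentially"
    by real_asymp
  ultimately have "(?q \<longlongrightarrow> 0) sequentially"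
    by (rule Lim_null_comparison)
  moreover have "((\<lambda>j. 1 / real j) \<longlongrightarrow> 0) sequentially"
    by real_asymp
  ultimately have "((\<lambda>j. (1 + 1 / real j) / 4 - ?q j) \<longlongrightarrow> (1 + 0) / 4 - 0) sequentially"
    by (intro tendsto_intros) auto
  then show ?thesis
    using eq by (simp add: tendsto_cong)
qed

lemma eventually_moment_range:
  assumes "filterlim m at_top sequentially" "\<forall>\<^sub>F j in sequentially. real_of_int (m j) \<le> sqrt (real j)"
  shows "\<forall>\<^sub>F j in sequentially. 1 \<le> m j \<and> m j + 2 \<le> int j"
proof -
  have "\<forall>\<^sub>F j in sequentially. 1 \<le> m j"
    using assms(1) by (simp add: filterlim_at_top)
  then show ?thesis
    using assms(2) eventually_ge_at_top[of 4]
  proof eventually_elim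
    case (elim j)
    then show ?case
      using sqrt_add_le_self[of j] by linarith
  qed
qed

lemma cos_arcsin_ratio_tendsto:
  assumes "\<forall>\<^sub>F j in sequentially. 1 \<le> m j" "\<forall>\<^sub>F j in sequentially. real_of_int (m j) \<le> sqrt (real j)"
  shows "((\<lambda>j. cos (arcsin (real_of_int (m j) / real j))) \<longlongrightarrow> 1) sequentially"
proof -
  have "\<forall>\<^sub>F j in sequentially. norm (real_of_int (m j) / real j) \<le> 1 / sqrt (real j)"
    using assms
  proof eventually_elim
    case (elim j)
    then have "real_of_int (m j) / real j \<le> sqrt (real j) / real j"
      by (intro divide_right_mono) auto
    with elim show ?case
      by (simp add: sqrt_divide_self_eq inverse_eq_divide)
  qed
  moreover have "((\<lambda>j. 1 / sqrt (real j)) \<longlongrightarrow> 0) sequentially"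
    by real_asymp
  ultimately have "((\<lambda>j. real_of_int (m j) / real j) \<longlongrightarrow> 0) sequentially"
    by (rule Lim_null_comparison)
  moreover have "isCont (\<lambda>x. cos (arcsin x)) 0"
    by (intro continuous_intros isCont_arcsin) auto
  ultimately show ?thesis
    using isCont_tendsto_compose by fastforce
qed

lemma ratio_moment_tendsto:
  assumes m_lim: "filterlim m at_top sequentially"
    and m_le: "\<forall>\<^sub>F j in sequentially. real_of_int (m j) \<le> sqrt (real j)"
    and "k \<le> 4"
  shows "((\<lambda>j. ratio_moment j (m j) k) \<longlongrightarrow> moment_poly k 1 0 (1/4) (1/4) (1/4) (1/4)) sequentially"
proof -
  have range: "\<forall>\<^sub>F j in sequentially. 1 \<le> m j \<and> m j + 2 \<le> int j"
    using eventually_moment_range[OF m_lim m_le] .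
  have V_lim: "((\<lambda>j. scaled_ladder_sq j (m j + r)) \<longlongrightarrow> 1/4) sequentially" if "- 2 \<le> r" "r \<le> 1" for r
  proof (rule scaled_ladder_sq_tendsto)
    show "\<forall>\<^sub>F j in sequentially. \<bar>real_of_int (m j + r)\<bar> \<le> sqrt (real j) + 2"
      using range m_le by eventually_elim (use that in auto)
  qed
  have "((\<lambda>j. 1 / real_of_int (m j)) \<longlongrightarrow> 0) sequentially"
    using tendsto_inverse_0_at_top[OF filterlim_compose[OF filterlim_real_of_int_at_top m_lim]]
    by (simp add: inverse_eq_divide o_def)
  with V_lim[of "- 2"] V_lim[of "- 1"] V_lim[of 0] V_lim[of 1] have
    "((\<lambda>j. moment_poly k (cos (arcsin (real_of_int (m j) / real j))) (1 / real_of_int (m j))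
        (scaled_ladder_sq j (m j - 2)) (scaled_ladder_sq j (m j - 1)) (scaled_ladder_sq j (m j))
        (scaled_ladder_sq j (m j + 1))) \<longlongrightarrow> moment_poly k 1 0 (1/4) (1/4) (1/4) (1/4)) sequentially"
    using range m_le by (intro tendsto_moment_poly \<open>k \<le> 4\<close> cos_arcsin_ratio_tendsto) (auto elim: eventually_mono)
  then show ?thesis
    by (rule Lim_transform_eventually) (use range \<open>k \<le> 4\<close> in \<open>auto elim!: eventually_mono simp: ratio_moment_formula\<close>)
qed

section \<open>A quartic majorant of the square root\<close>

text \<open>The coefficients are tuned so that the expectation of the quartic under the limiting
  moments, computed in quartic_moment_limit, stays below 1.\<close>

definition quartic_coeff :: "nat \<Rightarrow> real" where
  "quartic_coeff k = [47/100, 13/100, 117/100, - 47/50, 28/125] ! k"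

definition quartic :: "real \<Rightarrow> real" where
  "quartic y = (\<Sum>k\<le>4. quartic_coeff k * y ^ k)"

lemma quartic_eq: "quartic y = 47/100 + 13/100 * y + 117/100 * y^2 - 47/50 * y^3 + 28/125 * y^4"
  by (simp add: quartic_def quartic_coeff_def numeral_eq_Suc)

lemma quartic_sq_ge: "r \<le> quartic (r^2)"
proof -
  have "quartic (r^2) - r =
      47/100 * (1 - 50/47 * r - 89/94 * r^2 + 20/47 * r^3 + 31/94 * r^4)^2
      + 1147/2350 * (r - 3165/2294 * r^2 - 205/1147 * r^3 + 1151/2294 * r^4)^2
      + 50277/458800 * (r^2 - 5044/50277 * r^3 - 25403/50277 * r^4)^2
      + 48014/1256925 * (r^3 - 34871/48014 * r^4)^2 + 5656/3000875 * (r^4)^2"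
    unfolding quartic_eq by (simp add: algebra_simps power2_eq_square power3_eq_cube power4_eq_xxxx eval_nat_numeral)
  also have "\<dots> \<ge> 0"
    by (intro add_nonneg_nonneg mult_nonneg_nonneg) auto
  finally show ?thesis
    by simp
qed

lemma quartic_neg_sq_ge: "r \<le> quartic (- (r^2))"
proof -
  have "quartic (- (r^2)) - r =
      47/100 * (1 - 50/47 * r - 163/94 * r^2 + 40/47 * r^3 + 7/94 * r^4)^2
      + 91/94 * (r - 1191/910 * r^2 - 4/5 * r^3 + 129/910 * r^4)^2
      + 15597/36400 * (r^2 - 5096/5199 * r^3 - 6905/15597 * r^4)^2
      + 18557/43325 * (r^3 - 27539/111342 * r^4)^2 + 851349/9278500 * (r^4)^2"
    unfolding quartic_eq by (simp add: algebra_simps power2_eq_square power3_eq_cube power4_eq_xxxx eval_nat_numeral)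
  also have "\<dots> \<ge> 0"
    by (intro add_nonneg_nonneg mult_nonneg_nonneg) auto
  finally show ?thesis
    by simp
qed

lemma sqrt_abs_le_quartic: "sqrt \<bar>y\<bar> \<le> quartic y"
proof (cases "y \<ge> 0")
  case True
  then have "y = (sqrt \<bar>y\<bar>)^2"
    by simp
  then show ?thesis
    using quartic_sq_ge[of "sqrt \<bar>y\<bar>"] by simp
next
  case False
  then have "y = - ((sqrt \<bar>y\<bar>)^2)"
    by simp
  then show ?thesis
    using quartic_neg_sq_ge[of "sqrt \<bar>y\<bar>"] by simp
qed

lemma quartic_moment_limit: "(\<Sum>k\<le>4. quartic_coeff k * moment_poly k 1 0 (1/4) (1/4) (1/4) (1/4)) = 197/200"
  by (simp add: quartic_coeff_def moment_poly_def numeral_eq_Suc power2_eq_square)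

lemma lemma3_sum_half_le:
  assumes "1 \<le> m" "real_of_int m \<le> sqrt (real j)"
  shows "lemma3_sum (1/2) j m \<le> (\<Sum>k\<le>4. quartic_coeff k * ratio_moment j m k)"
proof -
  have Msat_m: "Msat j m = real_of_int m"
    using assms by (simp add: Msat_def)
  have "Msat j a powr (1/2) / Msat j m powr (1/2) \<le> quartic (real_of_int a / real_of_int m)" for a
  proof -
    have "Msat j a powr (1/2) / Msat j m powr (1/2) \<le> real_of_int \<bar>a\<bar> powr (1/2) / real_of_int m powr (1/2)"
      unfolding Msat_m using assms(1) by (intro divide_right_mono powr_mono2) (auto simp: Msat_def)
    also have "\<dots> = sqrt \<bar>real_of_int a / real_of_int m\<bar>"
      using assms(1) by (simp add: powr_half_sqrt real_sqrt_divide)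
    also have "\<dots> \<le> quartic (real_of_int a / real_of_int m)"
      by (rule sqrt_abs_le_quartic)
    finally show ?thesis .
  qed
  then have "lemma3_sum (1/2) j m \<le> (\<Sum>a\<in>mrange j.
      (cmod (wigner_d j a m (arcsin (real_of_int m / real j))))\<^sup>2 * quartic (real_of_int a / real_of_int m))"
    unfolding lemma3_sum_def times_divide_eq_right[symmetric]
    by (intro sum_mono mult_left_mono) auto
  also have "\<dots> = (\<Sum>k\<le>4. quartic_coeff k * ratio_moment j m k)"
    unfolding quartic_def ratio_moment_def
    by (simp add: sum_distrib_left sum_distrib_right mult_ac sum.swap[of _ "mrange j"])
  finally show ?thesis .
qed

theorem lemma3:
  shows "\<exists>c \<alpha>. c < 1 \<and> 0 < \<alpha> \<and> \<alpha> < 1 \<and>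
    (\<forall>m :: nat \<Rightarrow> int.
       filterlim m at_top sequentially \<longrightarrow>
       (\<forall>\<^sub>F j in sequentially. real_of_int (m j) \<le> sqrt (real j)) \<longrightarrow>
       (\<forall>\<^sub>F j in sequentially. lemma3_sum \<alpha> j (m j) < c))"
proof -
  have "\<forall>\<^sub>F j in sequentially. lemma3_sum (1/2) j (m j) < 99/100"
    if m_lim: "filterlim m at_top sequentially"
      and m_le: "\<forall>\<^sub>F j in sequentially. real_of_int (m j) \<le> sqrt (real j)" for m :: "nat \<Rightarrow> int"
  proof -
    have "((\<lambda>j. \<Sum>k\<le>4. quartic_coeff k * ratio_moment j (m j) k) \<longlongrightarrow>
        (\<Sum>k\<le>4. quartic_coeff k * moment_poly k 1 0 (1/4) (1/4) (1/4) (1/4))) sequentially"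
      by (intro tendsto_sum tendsto_mult tendsto_const ratio_moment_tendsto[OF m_lim m_le]) simp
    then have "\<forall>\<^sub>F j in sequentially. (\<Sum>k\<le>4. quartic_coeff k * ratio_moment j (m j) k) < 99/100"
      by (rule order_tendstoD) (simp add: quartic_moment_limit)
    moreover have "\<forall>\<^sub>F j in sequentially. lemma3_sum (1/2) j (m j) \<le> (\<Sum>k\<le>4. quartic_coeff k * ratio_moment j (m j) k)"
      using eventually_moment_range[OF m_lim m_le] m_le
      by eventually_elim (rule lemma3_sum_half_le; simp)
    ultimately show ?thesis
      by eventually_elim simp
  qed
  then show ?thesis
    by (intro exI[of _ "99/100"] exI[of _ "1/2"]) auto
qed

end
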